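(* Let $S$ be a fixed set of permissible block sizes and $L$ a fixed set of permissible loop orders, and let $\mathcal{C}$ be the class of all Greechie diagrams all of whose blocks have size in $S$ and all of whose loops have order in $L$, optionally further restricted to connected diagrams. Then the only irreducible diagrams in $\mathcal{C}$ are those with exactly one block; equivalently, every $D\in\mathcal{C}$ with more than one block has a block $e$ with $D-e\in\mathcal{C}$.
   Context: A diagram is a pair $(V,E)$ with $V\neq\emptyset$ a set of atoms and $E$ a set of nonempty subsets of $V$ (blocks). A loop of order $n\ge2$ is a sequence $(e_1,\dots,e_n)$ of mutually different blocks for which there are mutually distinct atoms $\nu_1,\dots,\nu_n$ with $\nu_i\in e_i\cap e_{i+1}$ ($i=1,\dots,n$, $e_{n+1}=e_1$). A Greechie diagram is a diagram such that: (1) every atom belongs to at least one block; (2) if there are at least two atoms, every block has at least 2 elements; (3) every block intersecting another block has at least 3 elements; (4) two different blocks intersect in at most one atom; (5) there is no loop of order 3. A diagram is connected if for all atoms $\nu,\nu'$ there are blocks $e_1,\dots,e_k$ with $\nu\in e_1$, $\nu'\in e_k$ and $e_i\cap e_{i+1}\neq\emptyset$ for $1\le i\le k-1$. For $e\in E$, $D-e$ is obtained by removing $e$ and any atoms that lay in $e$ but in no other block. $D\in\mathcal{C}$ is irreducible if there is no block $e$ of $D$ with $D-e\in\mathcal{C}$. *)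

theory Defs
  imports Main
begin

type_synonym 'a diagram = "'a set \<times> 'a set set"

definition is_diagram :: "'a diagram \<Rightarrow> bool" where
  "is_diagram D \<longleftrightarrow> (let (V, E) = D in
     V \<noteq> {} \<and> (\<forall>e\<in>E. e \<noteq> {} \<and> e \<subseteq> V))"

definition is_loop :: "'a set set \<Rightarrow> 'a set list \<Rightarrow> bool" where
  "is_loop E es \<longleftrightarrow> length es \<ge> 2 \<and> distinct es \<and> set es \<subseteq> E \<and>
     (\<exists>nus. length nus = length es \<and> distinct nus \<and>
        (\<forall>i < length es. nus ! i \<in> es ! i \<inter> es ! (Suc i mod length es)))"

definition greechie :: "'a diagram \<Rightarrow> bool" where
  "greechie D \<longleftrightarrow> is_diagram D \<and> (let (V, E) = D in
     (\<forall>v\<in>V. \<exists>e\<in>E. v \<in> e) \<and>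
     ((\<exists>x\<in>V. \<exists>y\<in>V. x \<noteq> y) \<longrightarrow> (\<forall>e\<in>E. card e \<ge> 2)) \<and>
     (\<forall>e\<in>E. (\<exists>f\<in>E. f \<noteq> e \<and> e \<inter> f \<noteq> {}) \<longrightarrow> card e \<ge> 3) \<and>
     (\<forall>e\<in>E. \<forall>f\<in>E. e \<noteq> f \<longrightarrow> card (e \<inter> f) \<le> 1) \<and>
     (\<nexists>es. is_loop E es \<and> length es = 3))"

definition connected_diagram :: "'a diagram \<Rightarrow> bool" where
  "connected_diagram D \<longleftrightarrow> (let (V, E) = D in
     \<forall>v\<in>V. \<forall>v'\<in>V. \<exists>es. es \<noteq> [] \<and> set es \<subseteq> E \<and> v \<in> hd es \<and> v' \<in> last es \<and>
        (\<forall>i. Suc i < length es \<longrightarrow> es ! i \<inter> es ! Suc i \<noteq> {}))"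

definition remove_block :: "'a diagram \<Rightarrow> 'a set \<Rightarrow> 'a diagram" where
  "remove_block D e = (let (V, E) = D in
     (V - {v \<in> e. \<forall>f\<in>E - {e}. v \<notin> f}, E - {e}))"

definition diag_class :: "nat set \<Rightarrow> nat set \<Rightarrow> bool \<Rightarrow> 'a diagram set" where
  "diag_class S L conn = {D. finite (fst D) \<and> greechie D \<and>
     (\<forall>e\<in>snd D. card e \<in> S) \<and>
     (\<forall>es. is_loop (snd D) es \<longrightarrow> length es \<in> L) \<and>
     (conn \<longrightarrow> connected_diagram D)}"

definition irreducible_in :: "'a diagram set \<Rightarrow> 'a diagram \<Rightarrow> bool" where
  "irreducible_in C D \<longleftrightarrow> D \<in> C \<and> \<not> (\<exists>e\<in>snd D. remove_block D e \<in> C)"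

end

theory Submission
  imports Defs
begin

text \<open>Deleting a block keeps every defining condition of the class except possibly
  connectedness: only the block and the atoms it alone covered disappear, the remaining
  blocks are untouched, and a loop of the smaller diagram is a loop of the original one.
  For connectedness, fix a block and delete one at maximal distance from it in the finite,
  connected intersection graph of the blocks; shortest paths to all other blocks avoid it.\<close>

lemma relpow_avoids_farther:
  assumes "(c, x) \<in> R ^^ n" "n \<le> (LEAST k. (c, a) \<in> R ^^ k)" "x \<noteq> a"
  shows "(c, x) \<in> (Restr R (- {a}))\<^sup>*"
  using assms
proof (induction n arbitrary: x)
  case 0
  then show ?case by simp
next
  case (Suc m)
  then obtain y where y: "(c, y) \<in> R ^^ m" "(y, x) \<in> R"
    by (meson relpow_Suc_E)
  have "y \<noteq> a"
    using Least_le[of "\<lambda>k. (c, a) \<in> R ^^ k" m] y(1) Suc.prems(2) by auto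
  then have "(c, y) \<in> (Restr R (- {a}))\<^sup>*"
    using Suc.IH y(1) Suc.prems(2) by simp
  moreover have "(y, x) \<in> Restr R (- {a})"
    using y(2) \<open>y \<noteq> a\<close> Suc.prems(3) by blast
  ultimately show ?case
    by (rule rtrancl_into_rtrancl)
qed

lemma exists_non_cut_vertex:
  fixes r :: "'a rel"
  assumes "finite A" "A \<noteq> {}" "sym r"
    and connected: "\<forall>x\<in>A. \<forall>y\<in>A. (x, y) \<in> (Restr r A)\<^sup>*"
  shows "\<exists>a\<in>A. \<forall>x\<in>A - {a}. \<forall>y\<in>A - {a}. (x, y) \<in> (Restr r (A - {a}))\<^sup>*"
proof -
  obtain c where "c \<in> A" using \<open>A \<noteq> {}\<close> by blast
  define dist where "dist x = (LEAST n. (c, x) \<in> Restr r A ^^ n)" for x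
  have path_dist: "(c, x) \<in> Restr r A ^^ dist x" if "x \<in> A" for x
  proof -
    have "(c, x) \<in> (Restr r A)\<^sup>*"
      using connected \<open>c \<in> A\<close> that by blast
    then obtain n where "(c, x) \<in> Restr r A ^^ n"
      using rtrancl_imp_relpow by blast
    then show ?thesis
      unfolding dist_def by (rule LeastI)
  qed
  have "Max (dist ` A) \<in> dist ` A"
    using \<open>finite A\<close> \<open>A \<noteq> {}\<close> by simp
  then obtain a where "a \<in> A" "dist a = Max (dist ` A)"
    by (metis imageE)
  then have farthest: "dist x \<le> dist a" if "x \<in> A" for x
    using \<open>finite A\<close> that by simp
  have "Restr (Restr r A) (- {a}) = Restr r (A - {a})"
    by blast
  then have from_c: "(c, x) \<in> (Restr r (A - {a}))\<^sup>*" if "x \<in> A - {a}" for x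
    using that relpow_avoids_farther[OF path_dist[of x], of a] farthest[of x]
    unfolding dist_def by simp
  have "sym (Restr r (A - {a}))"
    using \<open>sym r\<close> by (auto simp: sym_def)
  then have "sym ((Restr r (A - {a}))\<^sup>*)"
    by (rule sym_rtrancl)
  then have "(x, y) \<in> (Restr r (A - {a}))\<^sup>*" if "x \<in> A - {a}" "y \<in> A - {a}" for x y
    using from_c[OF that(1)] from_c[OF that(2)] by (blast dest: symD intro: rtrancl_trans)
  then show ?thesis
    using \<open>a \<in> A\<close> by blast
qed

lemma rtrancl_Restr_iff_walk:
  assumes "x \<in> A"
  shows "(x, y) \<in> (Restr r A)\<^sup>* \<longleftrightarrow>
    (\<exists>ws. ws \<noteq> [] \<and> set ws \<subseteq> A \<and> hd ws = x \<and> last ws = y \<and>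
          successively (\<lambda>u v. (u, v) \<in> r) ws)"
proof
  assume "(x, y) \<in> (Restr r A)\<^sup>*"
  then have "x \<in> A \<longrightarrow> (\<exists>ws. ws \<noteq> [] \<and> set ws \<subseteq> A \<and> hd ws = x \<and> last ws = y \<and>
      successively (\<lambda>u v. (u, v) \<in> r) ws)"
  proof (induction rule: converse_rtrancl_induct)
    case base
    show ?case
      by (intro impI exI[of _ "[y]"]) simp
  next
    case (step x' z)
    then obtain ws where "ws \<noteq> []" "set ws \<subseteq> A" "hd ws = z" "last ws = y"
        "successively (\<lambda>u v. (u, v) \<in> r) ws"
      by blast
    with step.hyps(1) show ?case
      by (intro impI exI[of _ "x' # ws"]) (auto simp: successively_Cons)
  qed
  with assms show "\<exists>ws. ws \<noteq> [] \<and> set ws \<subseteq> A \<and> hd ws = x \<and> last ws = y \<and>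
      successively (\<lambda>u v. (u, v) \<in> r) ws"
    by blast
next
  assume "\<exists>ws. ws \<noteq> [] \<and> set ws \<subseteq> A \<and> hd ws = x \<and> last ws = y \<and>
      successively (\<lambda>u v. (u, v) \<in> r) ws"
  then obtain ws where "ws \<noteq> []" "set ws \<subseteq> A" "hd ws = x" "last ws = y"
      "successively (\<lambda>u v. (u, v) \<in> r) ws"
    by blast
  then show "(x, y) \<in> (Restr r A)\<^sup>*"
  proof (induction ws arbitrary: x)
    case Nil
    then show ?case by simp
  next
    case (Cons w ws)
    show ?case
    proof (cases "ws = []")
      case True
      then show ?thesis using Cons.prems by simp
    next
      case False
      then have "(x, hd ws) \<in> Restr r A"
        using Cons.prems by (auto simp: successively_Cons)
      moreover have "(hd ws, y) \<in> (Restr r A)\<^sup>*"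
        using Cons False by (simp add: successively_Cons)
      ultimately show ?thesis
        by (rule converse_rtrancl_into_rtrancl)
    qed
  qed
qed

definition meets :: "'a set rel" where
  "meets = {(f, g). f \<inter> g \<noteq> {}}"

lemma in_meets_iff [simp]: "(f, g) \<in> meets \<longleftrightarrow> f \<inter> g \<noteq> {}"
  by (simp add: meets_def)

lemma sym_meets: "sym meets"
  by (auto simp: sym_def)

lemma blocks_connected_if_connected_diagram:
  assumes "is_diagram (V, E)" "connected_diagram (V, E)" "f \<in> E" "g \<in> E"
  shows "(f, g) \<in> (Restr meets E)\<^sup>*"
proof -
  have blocks: "\<forall>e\<in>E. e \<noteq> {} \<and> e \<subseteq> V"
    using assms(1) by (simp add: is_diagram_def)
  obtain v w where "v \<in> f" "w \<in> g"
    using blocks assms(3,4) by (meson ex_in_conv)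
  moreover have "v \<in> V" "w \<in> V"
    using blocks assms(3,4) calculation by auto
  moreover have "\<forall>v\<in>V. \<forall>v'\<in>V. \<exists>ws. ws \<noteq> [] \<and> set ws \<subseteq> E \<and> v \<in> hd ws \<and> v' \<in> last ws \<and>
      (\<forall>i. Suc i < length ws \<longrightarrow> ws ! i \<inter> ws ! Suc i \<noteq> {})"
    using assms(2) by (simp add: connected_diagram_def)
  ultimately obtain ws where ws: "ws \<noteq> []" "set ws \<subseteq> E" "v \<in> hd ws" "w \<in> last ws"
      "\<forall>i. Suc i < length ws \<longrightarrow> ws ! i \<inter> ws ! Suc i \<noteq> {}"
    by blast
  then have "hd ws \<in> E" "last ws \<in> E"
    by auto
  have "successively (\<lambda>u u'. (u, u') \<in> meets) ws"
    using ws(5) by (simp add: successively_conv_nth)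
  then have "(hd ws, last ws) \<in> (Restr meets E)\<^sup>*"
    using ws(1,2) rtrancl_Restr_iff_walk[OF \<open>hd ws \<in> E\<close>] by blast
  have "(f, hd ws) \<in> Restr meets E"
    using assms(3) \<open>hd ws \<in> E\<close> \<open>v \<in> f\<close> ws(3) by auto
  then have "(f, last ws) \<in> (Restr meets E)\<^sup>*"
    using \<open>(hd ws, last ws) \<in> (Restr meets E)\<^sup>*\<close> by (rule converse_rtrancl_into_rtrancl)
  moreover have "(last ws, g) \<in> Restr meets E"
    using assms(4) \<open>last ws \<in> E\<close> \<open>w \<in> g\<close> ws(4) by auto
  ultimately show ?thesis
    by (rule rtrancl_into_rtrancl)
qed

lemma connected_diagram_if_blocks_connected:
  assumes covered: "\<forall>v\<in>V. \<exists>e\<in>E. v \<in> e"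
    and blocks_connected: "\<forall>f\<in>E. \<forall>g\<in>E. (f, g) \<in> (Restr meets E)\<^sup>*"
  shows "connected_diagram (V, E)"
proof -
  have "\<exists>ws. ws \<noteq> [] \<and> set ws \<subseteq> E \<and> v \<in> hd ws \<and> w \<in> last ws \<and>
      (\<forall>i. Suc i < length ws \<longrightarrow> ws ! i \<inter> ws ! Suc i \<noteq> {})"
    if atoms: "v \<in> V" "w \<in> V" for v w
  proof -
    obtain f g where fg: "f \<in> E" "g \<in> E" "v \<in> f" "w \<in> g"
      using covered atoms by blast
    then have "(f, g) \<in> (Restr meets E)\<^sup>*"
      using blocks_connected by blast
    then obtain ws where "ws \<noteq> []" "set ws \<subseteq> E" "hd ws = f" "last ws = g"
        "successively (\<lambda>u u'. (u, u') \<in> meets) ws"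
      unfolding rtrancl_Restr_iff_walk[OF fg(1)] by blast
    then show ?thesis
      using fg by (auto simp: successively_conv_nth)
  qed
  then show ?thesis
    unfolding connected_diagram_def by simp
qed

lemma is_loop_mono: "is_loop E' es \<Longrightarrow> E' \<subseteq> E \<Longrightarrow> is_loop E es"
  unfolding is_loop_def by auto

lemma remove_block_eq:
  "remove_block (V, E) e = (V - {v \<in> e. \<forall>f\<in>E - {e}. v \<notin> f}, E - {e})"
  by (simp add: remove_block_def)

lemma greechie_subdiagram:
  assumes "greechie (V, E)" "V' \<subseteq> V" "E' \<subseteq> E"
    and "is_diagram (V', E')" "\<forall>v\<in>V'. \<exists>f\<in>E'. v \<in> f"
  shows "greechie (V', E')"
proof -
  have size2: "(\<exists>x\<in>V. \<exists>y\<in>V. x \<noteq> y) \<longrightarrow> (\<forall>f\<in>E. card f \<ge> 2)"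
    and size3: "\<forall>f\<in>E. (\<exists>g\<in>E. g \<noteq> f \<and> f \<inter> g \<noteq> {}) \<longrightarrow> card f \<ge> 3"
    and meet: "\<forall>f\<in>E. \<forall>g\<in>E. f \<noteq> g \<longrightarrow> card (f \<inter> g) \<le> 1"
    and no_triangle: "\<nexists>es. is_loop E es \<and> length es = 3"
    using assms(1) by (simp_all add: greechie_def)
  show ?thesis
    unfolding greechie_def Let_def prod.case
  proof (intro conjI)
    show "(\<exists>x\<in>V'. \<exists>y\<in>V'. x \<noteq> y) \<longrightarrow> (\<forall>f\<in>E'. card f \<ge> 2)"
      using size2 assms(2,3) by blast
    show "\<forall>f\<in>E'. (\<exists>g\<in>E'. g \<noteq> f \<and> f \<inter> g \<noteq> {}) \<longrightarrow> card f \<ge> 3"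
      using size3 assms(3) by blast
    show "\<forall>f\<in>E'. \<forall>g\<in>E'. f \<noteq> g \<longrightarrow> card (f \<inter> g) \<le> 1"
      using meet assms(3) by blast
    show "\<nexists>es. is_loop E' es \<and> length es = 3"
      using no_triangle is_loop_mono assms(3) by blast
  qed (use assms(4,5) in auto)
qed

lemma greechie_remove_block:
  assumes "greechie (V, E)" "E - {e} \<noteq> {}"
  shows "greechie (remove_block (V, E) e)"
proof -
  define V' where "V' = V - {v \<in> e. \<forall>f\<in>E - {e}. v \<notin> f}"
  have "\<forall>f\<in>E - {e}. f \<noteq> {} \<and> f \<subseteq> V'"
    using assms(1) unfolding greechie_def is_diagram_def V'_def by auto
  then have "is_diagram (V', E - {e})"
    using assms(2) unfolding is_diagram_def by auto
  moreover have "\<forall>v\<in>V'. \<exists>f\<in>E - {e}. v \<in> f"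
    using assms(1) unfolding greechie_def V'_def by auto
  moreover have "V' \<subseteq> V"
    unfolding V'_def by blast
  ultimately have "greechie (V', E - {e})"
    using greechie_subdiagram[OF assms(1)] by blast
  then show ?thesis
    unfolding remove_block_eq V'_def .
qed

lemma remove_block_in_diag_class:
  assumes "(V, E) \<in> diag_class S L conn" "E - {e} \<noteq> {}"
    and "conn \<longrightarrow> connected_diagram (remove_block (V, E) e)"
  shows "remove_block (V, E) e \<in> diag_class S L conn"
proof -
  have "greechie (remove_block (V, E) e)"
    using assms(1) greechie_remove_block[OF _ assms(2)] unfolding diag_class_def by simp
  moreover have "\<forall>es. is_loop (E - {e}) es \<longrightarrow> length es \<in> L"
    using assms(1) is_loop_mono[of "E - {e}" _ E] unfolding diag_class_def by auto
  moreover have "finite (V - {v \<in> e. \<forall>f\<in>E - {e}. v \<notin> f})"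
    using assms(1) unfolding diag_class_def by simp
  ultimately show ?thesis
    using assms(1,3) unfolding diag_class_def remove_block_eq by simp
qed

lemma finite_blocks: "finite V \<Longrightarrow> is_diagram (V, E) \<Longrightarrow> finite E"
  unfolding is_diagram_def by (auto intro: finite_subset[of E "Pow V"])

lemma exists_removable_block:
  assumes D: "(V, E) \<in> diag_class S L conn" and "card E > 1"
  shows "\<exists>e\<in>E. remove_block (V, E) e \<in> diag_class S L conn"
proof -
  have greechie: "greechie (V, E)" and "finite V"
    using D by (auto simp: diag_class_def)
  then have "finite E"
    by (simp add: finite_blocks greechie_def)
  have diagram: "is_diagram (V, E)"
    using greechie by (simp add: greechie_def)
  have "E \<noteq> {}"
    using \<open>card E > 1\<close> by auto
  obtain e where "e \<in> E"
    and blocks_connected: "conn \<longrightarrow> (\<forall>f\<in>E - {e}. \<forall>g\<in>E - {e}. (f, g) \<in> (Restr meets (E - {e}))\<^sup>*)"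
  proof (cases conn)
    case True
    then have "\<forall>f\<in>E. \<forall>g\<in>E. (f, g) \<in> (Restr meets E)\<^sup>*"
      using D blocks_connected_if_connected_diagram[OF diagram] by (simp add: diag_class_def)
    then have "\<exists>e\<in>E. \<forall>f\<in>E - {e}. \<forall>g\<in>E - {e}. (f, g) \<in> (Restr meets (E - {e}))\<^sup>*"
      by (rule exists_non_cut_vertex[OF \<open>finite E\<close> \<open>E \<noteq> {}\<close> sym_meets])
    then show ?thesis
      using that by blast
  next
    case False
    then show ?thesis
      using that \<open>E \<noteq> {}\<close> by blast
  qed
  have "card (E - {e}) > 0"
    using \<open>card E > 1\<close> \<open>e \<in> E\<close> by (simp add: card_Diff_singleton)
  then have "E - {e} \<noteq> {}"
    by (metis card.empty less_irrefl)
  obtain V' where removed: "remove_block (V, E) e = (V', E - {e})"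
    by (simp add: remove_block_eq)
  have "greechie (V', E - {e})"
    using greechie_remove_block[OF greechie \<open>E - {e} \<noteq> {}\<close>] by (simp add: removed)
  then have "\<forall>v\<in>V'. \<exists>f\<in>E - {e}. v \<in> f"
    by (simp add: greechie_def)
  then have "conn \<longrightarrow> connected_diagram (remove_block (V, E) e)"
    using blocks_connected connected_diagram_if_blocks_connected removed by metis
  then have "remove_block (V, E) e \<in> diag_class S L conn"
    by (rule remove_block_in_diag_class[OF D \<open>E - {e} \<noteq> {}\<close>])
  then show ?thesis
    using \<open>e \<in> E\<close> by blast
qed

theorem theorem3:
  fixes S L :: "nat set" and conn :: bool and D :: "'a diagram"
  assumes "D \<in> diag_class S L conn"
  shows "(card (snd D) > 1 \<longrightarrow> (\<exists>e\<in>snd D. remove_block D e \<in> diag_class S L conn))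
       \<and> (irreducible_in (diag_class S L conn) D \<longrightarrow> card (snd D) = 1)"
proof -
  obtain V E where D: "D = (V, E)" by fastforce
  have "greechie (V, E)" "finite V"
    using assms by (auto simp: D diag_class_def)
  then have "finite E" "E \<noteq> {}"
    by (auto simp: finite_blocks greechie_def is_diagram_def)
  then have "card E \<ge> 1"
    by (simp add: Suc_le_eq card_gt_0_iff)
  moreover have "card E > 1 \<longrightarrow> (\<exists>e\<in>E. remove_block D e \<in> diag_class S L conn)"
    using exists_removable_block[of V E S L conn] assms by (simp add: D)
  ultimately show ?thesis
    by (auto simp: D irreducible_in_def)
qed

end
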